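(* Let $Y$ be a finite connected simple undirected graph with a cycle-edge $e=\{v,w\}$, let $O\in\mathsf{Acyc}(Y)$, and let $\mathbf{c}=c_1c_2\cdots c_m$ be a click-sequence for $O$ that contains every vertex of $\mathcal{I}(O)$ at least once and has $c_1=v$. Then every vertex of $\mathcal{I}(O)$ appears in $\mathbf{c}$ before any vertex of $\mathcal{I}(O)$ appears for the second time.
   Context: $\mathsf{Acyc}(Y)$ is the set of acyclic orientations; $i\leq_O j$ iff there is a directed path from $i$ to $j$ in $O$. $\mathcal{I}(O)=\{a: v\leq_O a\leq_O w\}$ if $v\leq_O w$, and $\mathcal{I}(O)=\varnothing$ otherwise. A click at a vertex $x$ which is a source reverses all edges incident to $x$. A click-sequence for $O$ is a sequence of vertices $c_1,\dots,c_m$ such that for each $i$, $c_i$ is a source of the orientation obtained from $O$ by successively clicking $c_1,\dots,c_{i-1}$; $\mathbf{c}(O)$ denotes the resulting orientation after all $m$ clicks. *)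

theory Defs
  imports Main
begin

definition simple_graph :: "'a set \<Rightarrow> 'a set set \<Rightarrow> bool" where
  "simple_graph V E \<longleftrightarrow> finite V \<and> (\<forall>e\<in>E. \<exists>a b. e = {a, b} \<and> a \<noteq> b \<and> a \<in> V \<and> b \<in> V)"

definition adj_rel :: "'a set set \<Rightarrow> ('a \<times> 'a) set" where
  "adj_rel E = {(a, b). {a, b} \<in> E}"

definition connected_graph :: "'a set \<Rightarrow> 'a set set \<Rightarrow> bool" where
  "connected_graph V E \<longleftrightarrow> (\<forall>a\<in>V. \<forall>b\<in>V. (a, b) \<in> (adj_rel E)\<^sup>*)"

definition walk :: "'a set set \<Rightarrow> 'a list \<Rightarrow> bool" where
  "walk E ys \<longleftrightarrow> (\<forall>i. Suc i < length ys \<longrightarrow> {ys ! i, ys ! Suc i} \<in> E)"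

definition cycle_edge :: "'a set \<Rightarrow> 'a set set \<Rightarrow> 'a \<Rightarrow> 'a \<Rightarrow> bool" where
  "cycle_edge V E v w \<longleftrightarrow> {v, w} \<in> E \<and>
     (\<exists>xs. xs \<noteq> [] \<and> distinct (v # w # xs) \<and> set xs \<subseteq> V \<and> walk E (v # w # xs @ [v]))"

definition orientation :: "'a set set \<Rightarrow> ('a \<times> 'a) set \<Rightarrow> bool" where
  "orientation E Ori \<longleftrightarrow> (\<forall>(a, b)\<in>Ori. {a, b} \<in> E) \<and>
     (\<forall>a b. {a, b} \<in> E \<longrightarrow> ((a, b) \<in> Ori \<longleftrightarrow> (b, a) \<notin> Ori))"

definition Acyc :: "'a set set \<Rightarrow> ('a \<times> 'a) set set" where
  "Acyc E = {Ori. orientation E Ori \<and> acyclic Ori}"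

definition leq_O :: "('a \<times> 'a) set \<Rightarrow> 'a \<Rightarrow> 'a \<Rightarrow> bool" where
  "leq_O Ori i j \<longleftrightarrow> (i, j) \<in> Ori\<^sup>*"

definition interval :: "('a \<times> 'a) set \<Rightarrow> 'a \<Rightarrow> 'a \<Rightarrow> 'a set" where
  "interval Ori v w = (if leq_O Ori v w then {a. leq_O Ori v a \<and> leq_O Ori a w} else {})"

definition is_source :: "('a \<times> 'a) set \<Rightarrow> 'a \<Rightarrow> bool" where
  "is_source Ori x \<longleftrightarrow> (\<forall>y. (y, x) \<notin> Ori)"

text \<open>Clicking x reverses all edges incident to x.\<close>
definition click :: "('a \<times> 'a) set \<Rightarrow> 'a \<Rightarrow> ('a \<times> 'a) set" where
  "click Ori x = {(a, b). ((a, b) \<in> Ori \<and> a \<noteq> x \<and> b \<noteq> x) \<or> ((b, a) \<in> Ori \<and> (a = x \<or> b = x))}"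

fun click_seq :: "'a set \<Rightarrow> ('a \<times> 'a) set \<Rightarrow> 'a list \<Rightarrow> bool" where
  "click_seq V Ori [] = True"
| "click_seq V Ori (c # cs) = (c \<in> V \<and> is_source Ori c \<and> click_seq V (click Ori c) cs)"

end

theory Submission
  imports Defs
begin

text \<open>Along a click-sequence the two endpoints of an edge are clicked alternately, the tail of the
  edge first: a vertex is a source only when all its neighbours have caught up with it. Hence in
  every prefix of the sequence the click counts decrease weakly along directed paths of \<open>O\<close>, and
  drop by at most one along an edge. Since \<open>c\<^sub>1 = v\<close> is a source, \<open>v \<rightarrow> w\<close> is an edge of \<open>O\<close>, so
  in the prefix ending at a second occurrence of some \<open>x \<in> \<I>(O)\<close> every \<open>a \<in> \<I>(O)\<close> satisfies
  \<open>#a \<ge> #w \<ge> #v - 1 \<ge> #x - 1 \<ge> 1\<close>.\<close>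

lemma in_set_take_iff_nth: "a \<in> set (take j cs) \<longleftrightarrow> (\<exists>k<j. k < length cs \<and> cs ! k = a)"
  by (metis in_set_conv_nth length_take min_less_iff_conj nth_take)

lemma click_seq_take: "click_seq V Ori cs \<Longrightarrow> click_seq V Ori (take n cs)"
  by (induction cs arbitrary: Ori n) (auto simp: take_Cons')

lemma click_seq_count_edge:
  assumes "click_seq V Ori cs" "(a, b) \<in> Ori" "(b, a) \<notin> Ori"
  shows "count_list cs b \<le> count_list cs a \<and> count_list cs a \<le> count_list cs b + 1"
  using assms
proof (induction cs arbitrary: Ori a b)
  case Nil
  then show ?case by simp
next
  case (Cons c cs)
  have source: "is_source Ori c" and rest: "click_seq V (click Ori c) cs"
    using Cons.prems(1) by auto
  have "c \<noteq> b"
    using source Cons.prems(2) unfolding is_source_def by auto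
  show ?case
  proof (cases "c = a")
    case True
    have "(b, a) \<in> click Ori c" "(a, b) \<notin> click Ori c"
      using True Cons.prems(2,3) unfolding click_def by auto
    then have "count_list cs a \<le> count_list cs b" "count_list cs b \<le> count_list cs a + 1"
      using Cons.IH[OF rest] by blast+
    with True \<open>c \<noteq> b\<close> show ?thesis by simp
  next
    case False
    have "(a, b) \<in> click Ori c" "(b, a) \<notin> click Ori c"
      using False \<open>c \<noteq> b\<close> Cons.prems(2,3) unfolding click_def by auto
    then have "count_list cs b \<le> count_list cs a" "count_list cs a \<le> count_list cs b + 1"
      using Cons.IH[OF rest] by blast+
    with False \<open>c \<noteq> b\<close> show ?thesis by simp
  qed
qed

lemma acyclic_click_seq_count_edge:
  assumes "acyclic Ori" "click_seq V Ori cs" "(a, b) \<in> Ori"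
  shows "count_list cs b \<le> count_list cs a" "count_list cs a \<le> count_list cs b + 1"
proof -
  have "(b, a) \<notin> Ori"
    using assms(1,3) unfolding acyclic_def by (meson r_into_trancl' trancl_into_trancl)
  with click_seq_count_edge[OF assms(2,3)]
  show "count_list cs b \<le> count_list cs a" "count_list cs a \<le> count_list cs b + 1" by auto
qed

lemma acyclic_click_seq_count_path:
  assumes "acyclic Ori" "click_seq V Ori cs" "(a, b) \<in> Ori\<^sup>*"
  shows "count_list cs b \<le> count_list cs a"
  using assms(3)
proof (induction rule: rtrancl_induct)
  case base
  then show ?case by simp
next
  case (step y z)
  then show ?case using acyclic_click_seq_count_edge(1)[OF assms(1,2) step(2)] by linarith
qed

lemma interval_memD:
  assumes "a \<in> interval Ori v w"
  shows "(v, a) \<in> Ori\<^sup>*" "(a, w) \<in> Ori\<^sup>*"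
  using assms unfolding interval_def leq_O_def by (auto split: if_splits)

lemma acyclic_click_seq_count_interval:
  assumes "acyclic Ori" "click_seq V Ori cs" "(v, w) \<in> Ori"
    and "x \<in> interval Ori v w" "a \<in> interval Ori v w"
  shows "count_list cs x \<le> count_list cs a + 1"
proof -
  have "count_list cs x \<le> count_list cs v"
    using acyclic_click_seq_count_path[OF assms(1,2) interval_memD(1)[OF assms(4)]] .
  also have "\<dots> \<le> count_list cs w + 1"
    using acyclic_click_seq_count_edge(2)[OF assms(1-3)] .
  also have "\<dots> \<le> count_list cs a + 1"
    using acyclic_click_seq_count_path[OF assms(1,2) interval_memD(2)[OF assms(5)]] by simp
  finally show ?thesis .
qed

lemma first_click_edge:
  assumes "orientation E Ori" "{v, w} \<in> E" "click_seq V Ori (v # cs)"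
  shows "(v, w) \<in> Ori"
proof -
  have "(w, v) \<notin> Ori"
    using assms(3) by (simp add: is_source_def)
  with assms(1,2) show ?thesis
    unfolding orientation_def by blast
qed

theorem proposition7:
  fixes V :: "'a set" and E :: "'a set set" and v w :: 'a
    and Ori :: "('a \<times> 'a) set" and cs :: "'a list"
  assumes "simple_graph V E"
    and "connected_graph V E"
    and "cycle_edge V E v w"
    and "Ori \<in> Acyc E"
    and "click_seq V Ori cs"
    and "interval Ori v w \<subseteq> set cs"
    and "cs \<noteq> []" and "hd cs = v"
  shows "\<forall>j < length cs. cs ! j \<in> interval Ori v w \<and> (\<exists>i<j. cs ! i = cs ! j) \<longrightarrow>
           (\<forall>a \<in> interval Ori v w. \<exists>k<j. cs ! k = a)"
proof (intro allI impI ballI)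
  fix j a
  assume j: "j < length cs" and x: "cs ! j \<in> interval Ori v w \<and> (\<exists>i<j. cs ! i = cs ! j)"
    and a: "a \<in> interval Ori v w"
  let ?x = "cs ! j" and ?pre = "take j cs" and ?T = "take (Suc j) cs"
  have acyc: "acyclic Ori" and orient: "orientation E Ori"
    using assms(4) unfolding Acyc_def by auto
  have T: "click_seq V Ori ?T" "?T = ?pre @ [?x]"
    using click_seq_take[OF assms(5)] j take_Suc_conv_app_nth by blast+
  have "click_seq V Ori (v # tl cs)"
    using assms(5,7,8) by (metis list.collapse)
  moreover have "{v, w} \<in> E"
    using assms(3) unfolding cycle_edge_def by blast
  ultimately have vw: "(v, w) \<in> Ori"
    using first_click_edge[OF orient] by blast
  obtain i where "i < j" "cs ! i = ?x" and x_int: "?x \<in> interval Ori v w"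
    using x by blast
  with j have x_in_pre: "?x \<in> set ?pre"
    unfolding in_set_take_iff_nth by auto
  have "2 \<le> count_list ?T ?x"
    using x_in_pre count_list_0_iff[of ?pre ?x] by (simp add: T(2))
  with acyclic_click_seq_count_interval[OF acyc T(1) vw x_int a]
  have "count_list ?T a \<noteq> 0"
    by simp
  then have "a \<in> set ?T"
    by (simp add: count_list_0_iff)
  then have "a \<in> set ?pre"
    using x_in_pre T(2) by auto
  then show "\<exists>k<j. cs ! k = a"
    unfolding in_set_take_iff_nth by blast
qed

end
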